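(* Let $d$ be a prime number and $p$ an odd prime, and let $T_d$ be the $d$-th Chebyshev polynomial of the first kind, viewed as a self-map of $\mathbb{A}^1(\mathbb{F}_p)=\mathbb{F}_p$. If $d=2$, or if $2d=p+1$, then $T_d$ has exactly $\frac{p-1}{2}$ leaves, i.e. exactly $\frac{p-1}{2}$ points $x\in\mathbb{F}_p$ have no preimage under $T_d$.
   Context: The $d$-th Chebyshev polynomial of the first kind $T_d\in\mathbb{Z}[z]$ is the monic degree-$d$ polynomial with $T_d(z+z^{-1})=z^d+z^{-d}$, reduced modulo $p$. A leaf of the functional graph of $T_d$ is a point with no preimage in $\mathbb{F}_p$. *)

theory Defs
  imports "HOL-Computational_Algebra.Polynomial" "HOL-Computational_Algebra.Primes"
begin

text \<open>Normalized (monic) Chebyshev polynomials of the first kind over the integers: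
  T_0 = 2, T_1 = z, T_(n+2) = z T_(n+1) - T_n, so that T_d(z + 1/z) = z^d + z^-d.\<close>
fun cheb :: "nat \<Rightarrow> int poly" where
  "cheb 0 = [:2:]"
| "cheb (Suc 0) = [:0, 1:]"
| "cheb (Suc (Suc n)) = [:0, 1:] * cheb (Suc n) - cheb n"

definition cheb_map :: "nat \<Rightarrow> int \<Rightarrow> int \<Rightarrow> int" where
  "cheb_map d p x = poly (cheb d) x mod p"

definition cheb_leaves :: "nat \<Rightarrow> int \<Rightarrow> int set" where
  "cheb_leaves d p = {x \<in> {0..p-1}. \<not> (\<exists>y \<in> {0..p-1}. cheb_map d p y = x)}"

end

(* The image of T_d in F_p has (p + 1)/2 elements. For d = 2 it is the set of squares shifted
   by -2. For 2d = p + 1 write x = z + 1/z with z in F_p or in F_p(sqrt D), D = x^2 - 4. If D is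
   a square, z lies in F_p and T_d(x) = z^d + z^-d = (z/p) x by Euler's criterion. Otherwise the
   Frobenius conjugates sqrt D, so z^p = 1/z and T_d(x)^2 = T_(p+1)(x) + 2 = 4. As T_d is odd, its
   image is exactly {x. x^2 - 4 is a square}, which x |-> (x - 2)/(x + 2) puts in bijection with
   the squares. *)
theory Submission
  imports Defs "HOL-Number_Theory.Number_Theory"
begin

lemma poly_cheb_2: "poly (cheb 2) x = x^2 - 2"
  by (simp add: numeral_2_eq_2 power2_eq_square)

lemma poly_cheb_minus: "poly (cheb n) (- x) = (-1)^n * poly (cheb n) (x :: int)"
proof (induction n rule: cheb.induct)
  case (3 n)
  then show ?case by (simp add: algebra_simps)
qed simp_all

lemma cong_poly: "[a = b] (mod m) \<Longrightarrow> [poly f a = poly f b] (mod m)" for a b m :: int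
  by (induction f) (simp_all add: cong_add cong_mult)

text \<open>Congruence modulo the ideal \<open>(p, q)\<close> of \<open>\<int>[X]\<close>, i.e. equality in \<open>\<bbbF>\<^sub>p[X]/(q)\<close>.\<close>
definition pcong :: "int \<Rightarrow> int poly \<Rightarrow> int poly \<Rightarrow> int poly \<Rightarrow> bool" where
  "pcong p q f g \<longleftrightarrow> (\<exists>u v. f - g = [:p:] * u + q * v)"

lemma pcong_refl [simp]: "pcong p q f f"
  unfolding pcong_def by (rule exI[of _ 0], rule exI[of _ 0]) simp

lemma pcong_sym: "pcong p q f g \<Longrightarrow> pcong p q g f"
proof -
  assume "pcong p q f g"
  then obtain u v where "f - g = [:p:] * u + q * v" unfolding pcong_def by blast
  then have "g - f = [:p:] * (- u) + q * (- v)" by (simp add: algebra_simps)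
  then show ?thesis unfolding pcong_def by blast
qed

lemma pcong_trans [trans]: "pcong p q f g \<Longrightarrow> pcong p q g h \<Longrightarrow> pcong p q f h"
proof -
  assume "pcong p q f g" "pcong p q g h"
  then obtain u v u' v' where "f - g = [:p:] * u + q * v" "g - h = [:p:] * u' + q * v'"
    unfolding pcong_def by blast
  then have "f - h = [:p:] * (u + u') + q * (v + v')"
    by (simp add: algebra_simps smult_add_right)
  then show ?thesis unfolding pcong_def by blast
qed

lemma pcong_add: "pcong p q f g \<Longrightarrow> pcong p q f' g' \<Longrightarrow> pcong p q (f + f') (g + g')"
proof -
  assume "pcong p q f g" "pcong p q f' g'"
  then obtain u v u' v' where "f - g = [:p:] * u + q * v" "f' - g' = [:p:] * u' + q * v'"
    unfolding pcong_def by blast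
  then have "f + f' - (g + g') = [:p:] * (u + u') + q * (v + v')"
    by (simp add: algebra_simps smult_add_right)
  then show ?thesis unfolding pcong_def by blast
qed

lemma pcong_mult: "pcong p q f g \<Longrightarrow> pcong p q f' g' \<Longrightarrow> pcong p q (f * f') (g * g')"
proof -
  assume "pcong p q f g" "pcong p q f' g'"
  then obtain u v u' v' where "f - g = [:p:] * u + q * v" "f' - g' = [:p:] * u' + q * v'"
    unfolding pcong_def by blast
  then have "f * f' - g * g' = f' * (f - g) + g * (f' - g')"
    by (simp add: algebra_simps)
  also have "\<dots> = [:p:] * (f' * u + g * u') + q * (f' * v + g * v')"
    using \<open>f - g = _\<close> \<open>f' - g' = _\<close> by (simp add: algebra_simps smult_add_right)
  finally show ?thesis unfolding pcong_def by blast
qed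

lemma pcong_minus: "pcong p q f g \<Longrightarrow> pcong p q (- f) (- g)"
  using pcong_mult[of p q "-1" "-1" f g] by simp

lemma pcong_diff: "pcong p q f g \<Longrightarrow> pcong p q f' g' \<Longrightarrow> pcong p q (f - f') (g - g')"
  using pcong_add[OF _ pcong_minus, of p q f g f' g'] by simp

lemma pcong_power: "pcong p q f g \<Longrightarrow> pcong p q (f ^ n) (g ^ n)"
  by (induction n) (simp_all add: pcong_mult)

lemma pcong_const: "[a = b] (mod p) \<Longrightarrow> pcong p q [:a:] [:b:]"
proof -
  assume "[a = b] (mod p)"
  then obtain k where "a - b = p * k" by (auto simp: cong_iff_dvd_diff dvd_def)
  then have "[:a:] - [:b:] = [:p:] * [:k:] + q * 0" by simp
  then show ?thesis unfolding pcong_def by blast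
qed

text \<open>Reduce the \<open>p\<close>-part modulo the monic \<open>q\<close>: what remains of the \<open>q\<close>-part has degree
  \<open>< degree q\<close>, hence vanishes.\<close>
lemma pcong_const_iff:
  assumes monic: "lead_coeff q = 1" and "degree q > 0"
  shows "pcong p q [:a:] [:b:] \<longleftrightarrow> [a = b] (mod p)"
proof
  assume "pcong p q [:a:] [:b:]"
  then obtain u v where uv: "[:a - b:] = [:p:] * u + q * v" unfolding pcong_def by auto
  obtain u' r where "pseudo_divmod u q = (u', r)" by (cases "pseudo_divmod u q")
  moreover have "q \<noteq> 0" using \<open>degree q > 0\<close> by auto
  ultimately have "u = q * u' + r" and r: "r = 0 \<or> degree r < degree q"
    using pseudo_divmod[of q u u' r] monic by simp_all
  then have eq: "[:a - b:] - [:p:] * r = q * ([:p:] * u' + v)"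
    using uv by (simp add: algebra_simps smult_add_right)
  have "degree ([:a - b:] - [:p:] * r) < degree q"
    using r \<open>degree q > 0\<close> degree_diff_le_max[of "[:a - b:]" "[:p:] * r"]
      degree_mult_le[of "[:p:]" r] by auto
  then have "[:p:] * u' + v = 0"
    using eq degree_mult_eq[of q "[:p:] * u' + v"] \<open>q \<noteq> 0\<close>
    by (cases "[:p:] * u' + v = 0") auto
  then have "[:a - b:] = [:p:] * r" using eq by simp
  then have "[:p:] dvd [:a - b:]" by (metis dvd_triv_left)
  then show "[a = b] (mod p)" by (simp add: cong_iff_dvd_diff)
qed (rule pcong_const)

lemma pcong_cheb:
  assumes sum: "pcong p q (z + w) [:x:]" and prod: "pcong p q (z * w) 1"
  shows "pcong p q [:poly (cheb n) x:] (z ^ n + w ^ n)"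
proof (induction n rule: cheb.induct)
  case 1
  show ?case by (simp add: numeral_poly)
next
  case 2
  show ?case using sum by (simp add: pcong_sym)
next
  case (3 n)
  have "[:poly (cheb (Suc (Suc n))) x:]
      = [:x:] * [:poly (cheb (Suc n)) x:] - 1 * [:poly (cheb n) x:]"
    by simp
  also have "pcong p q \<dots> ((z + w) * (z ^ Suc n + w ^ Suc n) - (z * w) * (z ^ n + w ^ n))"
    by (intro pcong_diff pcong_mult 3 pcong_sym[OF sum] pcong_sym[OF prod])
  also have "(z + w) * (z ^ Suc n + w ^ Suc n) - (z * w) * (z ^ n + w ^ n)
      = z ^ Suc (Suc n) + w ^ Suc (Suc n)"
    by (simp add: algebra_simps)
  finally show ?case .
qed

lemma cong_cheb:
  fixes z w x p :: int
  assumes "[z + w = x] (mod p)" and "[z * w = 1] (mod p)"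
  shows "[poly (cheb n) x = z ^ n + w ^ n] (mod p)"
proof -
  have "pcong p [:0, 1:] ([:z:] + [:w:]) [:x:]" "pcong p [:0, 1:] ([:z:] * [:w:]) 1"
    using pcong_const[OF assms(1)] pcong_const[OF assms(2)] by (simp_all add: one_pCons mult.commute)
  from pcong_cheb[OF this] show ?thesis
    by (simp add: pcong_const_iff poly_const_pow)
qed

lemma euler_criterion_int:
  fixes p a :: int
  assumes "prime p" and "2 < p"
  shows "[Legendre a p = a ^ nat ((p - 1) div 2)] (mod p)"
proof -
  have "int (nat p) = p" "(nat p - 1) div 2 = nat ((p - 1) div 2)"
    using \<open>2 < p\<close> by (simp, linarith)
  then show ?thesis using euler_criterion[of "nat p" a] assms by simp
qed

lemma fermat_int:
  fixes p a :: int
  assumes "prime p" and "2 < p"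
  shows "[a ^ nat p = a] (mod p)"
proof (cases "[a = 0] (mod p)")
  case True
  then have "[a ^ nat p = 0 ^ nat p] (mod p)" by (rule cong_pow)
  moreover have "(0::int) ^ nat p = 0" using \<open>2 < p\<close> by simp
  ultimately show ?thesis using True by (metis cong_sym cong_trans)
next
  case False
  define e where "e = nat ((p - 1) div 2)"
  obtain k where "p = 2 * k + 1" using prime_odd_int[OF assms] by (auto elim: oddE)
  then have "nat p = Suc (2 * e)" using \<open>2 < p\<close> unfolding e_def by simp
  then have "a ^ nat p = a * (a ^ e) ^ 2" by (simp add: power_mult mult.commute)
  also have "[\<dots> = a * Legendre a p ^ 2] (mod p)"
    using cong_sym[OF euler_criterion_int[OF assms, of a]] unfolding e_def
    by (intro cong_mult cong_refl cong_pow)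
  also have "Legendre a p ^ 2 = 1" using False by (auto simp: Legendre_def)
  finally show ?thesis by simp
qed

lemma pcong_power_add_prime:
  fixes p :: int and f g :: "int poly"
  assumes "prime p"
  shows "pcong p q ((f + g) ^ nat p) (f ^ nat p + g ^ nat p)"
proof -
  define n where "n = nat p"
  have n: "prime n" "p = int n" using assms prime_gt_0_int[OF assms] by (simp_all add: n_def)
  have "(f + g) ^ n = (\<Sum>k\<le>n. of_nat (n choose k) * f ^ k * g ^ (n - k))"
    by (rule binomial_ring)
  also have "\<dots> = f ^ n + g ^ n + (\<Sum>k\<in>{1..<n}. of_nat (n choose k) * f ^ k * g ^ (n - k))"
  proof -
    have "{..n} = insert 0 (insert n {1..<n})" using prime_gt_0_nat[OF n(1)] by auto
    then show ?thesis using prime_gt_0_nat[OF n(1)] by (simp add: add_ac)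
  qed
  also have "(\<Sum>k\<in>{1..<n}. of_nat (n choose k) * f ^ k * g ^ (n - k))
      = [:p:] * (\<Sum>k\<in>{1..<n}. of_nat ((n choose k) div n) * f ^ k * g ^ (n - k))"
    unfolding sum_distrib_left
  proof (rule sum.cong)
    fix k assume "k \<in> {1..<n}"
    then have "n choose k = n * ((n choose k) div n)" using dvd_choose_prime[of k n] n(1) by simp
    then have "(of_nat (n choose k) :: int poly) = [:p:] * of_nat ((n choose k) div n)"
      using n(2) by (metis of_nat_mult of_int_of_nat_eq of_int_poly)
    then show "of_nat (n choose k) * f ^ k * g ^ (n - k)
        = [:p:] * (of_nat ((n choose k) div n) * f ^ k * g ^ (n - k))"
      by (simp add: mult.assoc)
  qed simp
  finally have "(f + g) ^ n - (f ^ n + g ^ n)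
      = [:p:] * (\<Sum>k\<in>{1..<n}. of_nat ((n choose k) div n) * f ^ k * g ^ (n - k)) + q * 0"
    by simp
  then show ?thesis unfolding pcong_def n_def by blast
qed

lemma pcong_X_squared: "pcong p [:-D, 0, 1:] ([:0, 1:] ^ 2) [:D:]"
proof -
  have "[:0, 1:] ^ 2 - [:D:] = [:p:] * 0 + [:-D, 0, 1:] * 1" by (simp add: power2_eq_square)
  then show ?thesis unfolding pcong_def by blast
qed

text \<open>Frobenius on \<open>\<bbbF>\<^sub>p(\<surd>D)\<close>: \<open>\<surd>D\<^sup>p = D\<^bsup>(p-1)/2\<^esup> \<surd>D = -\<surd>D\<close> by Euler's criterion.\<close>
lemma pcong_power_prime_conj:
  fixes p D a b :: int
  assumes "prime p" and "2 < p" and "\<not> QuadRes p D"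
  shows "pcong p [:-D, 0, 1:] ([:a, b:] ^ nat p) [:a, -b:]"
proof -
  define X where "X = [:0, 1 :: int:]"
  define e where "e = nat ((p - 1) div 2)"
  obtain k where "p = 2 * k + 1" using prime_odd_int[OF assms(1,2)] by (auto elim: oddE)
  then have p_eq: "nat p = Suc (2 * e)" using \<open>2 < p\<close> unfolding e_def by simp
  have "\<not> [D = 0] (mod p)"
    using assms(3) unfolding QuadRes_def by (metis cong_sym power_zero_numeral)
  then have "Legendre D p = -1" using assms(3) unfolding Legendre_def by simp
  then have D_power: "[D ^ e = -1] (mod p)"
    using euler_criterion_int[OF assms(1,2), of D] unfolding e_def by (simp add: cong_sym_eq)
  have "X ^ nat p = X * (X ^ 2) ^ e" by (simp add: p_eq power_mult)
  also have "pcong p [:-D, 0, 1:] \<dots> (X * [:D:] ^ e)"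
    unfolding X_def by (intro pcong_mult pcong_power pcong_X_squared pcong_refl)
  also have "pcong p [:-D, 0, 1:] (X * [:D:] ^ e) (X * [:-1:])"
    unfolding poly_const_pow by (intro pcong_mult pcong_refl pcong_const D_power)
  finally have X_power: "pcong p [:-D, 0, 1:] (X ^ nat p) (X * [:-1:])" .
  have "[:a, b:] ^ nat p = ([:a:] + [:b:] * X) ^ nat p" by (simp add: X_def)
  also have "pcong p [:-D, 0, 1:] \<dots> ([:a:] ^ nat p + ([:b:] * X) ^ nat p)"
    by (rule pcong_power_add_prime[OF assms(1)])
  also have "[:a:] ^ nat p + ([:b:] * X) ^ nat p = [:a ^ nat p:] + [:b ^ nat p:] * X ^ nat p"
    by (simp only: power_mult_distrib poly_const_pow)
  also have "pcong p [:-D, 0, 1:] \<dots> ([:a:] + [:b:] * (X * [:-1:]))"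
    by (intro pcong_add pcong_mult pcong_const X_power fermat_int[OF assms(1,2)])
  also have "[:a:] + [:b:] * (X * [:-1:]) = [:a, -b:]" by (simp add: X_def)
  finally show ?thesis .
qed

lemma not_cong_0_if_mult_cong_1:
  fixes p z w :: int
  assumes "[z * w = 1] (mod p)" and "1 < p"
  shows "\<not> [z = 0] (mod p)"
proof
  assume "[z = 0] (mod p)"
  then have "[z * w = 0] (mod p)" using cong_mult[of z 0 p w w] by simp
  then show False using assms by (auto simp: cong_def)
qed

lemma Legendre_eq_if_mult_cong_1:
  fixes p z w :: int
  assumes "prime p" and "2 < p" and "[z * w = 1] (mod p)"
  shows "Legendre z p = Legendre w p"
proof -
  have "\<not> [z = 0] (mod p)" "\<not> [w = 0] (mod p)"
    using not_cong_0_if_mult_cong_1[of z w p] not_cong_0_if_mult_cong_1[of w z p] assms(2,3)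
    by (simp_all add: mult.commute)
  then have pm: "Legendre z p \<in> {1, -1}" "Legendre w p \<in> {1, -1}"
    unfolding Legendre_def by auto
  define k where "k = nat ((p - 1) div 2)"
  have "[Legendre z p * Legendre w p = z ^ k * w ^ k] (mod p)"
    unfolding k_def by (intro cong_mult euler_criterion_int assms(1,2))
  also have "z ^ k * w ^ k = (z * w) ^ k" by (simp add: power_mult_distrib)
  also have "[\<dots> = 1 ^ k] (mod p)" by (intro cong_pow assms(3))
  finally have "[Legendre z p * Legendre w p = 1] (mod p)" by simp
  moreover have "\<not> [-1 = 1] (mod p)"
    using \<open>2 < p\<close> zdvd_imp_le[of p 2] by (auto simp: cong_iff_dvd_diff)
  ultimately show ?thesis using pm by auto
qed

lemma QuadRes_cong: "[a = b] (mod p) \<Longrightarrow> QuadRes p a \<longleftrightarrow> QuadRes p b"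
  unfolding QuadRes_def by (meson cong_sym cong_trans)

lemma card_eq_if_bijective_relation:
  assumes "\<And>a. a \<in> A \<Longrightarrow> \<exists>!b. b \<in> B \<and> R a b"
    and "\<And>b. b \<in> B \<Longrightarrow> \<exists>!a. a \<in> A \<and> R a b"
  shows "card A = card B"
proof -
  define G where "G = {(a, b). a \<in> A \<and> b \<in> B \<and> R a b}"
  have "bij_betw fst G A" "bij_betw snd G B"
    unfolding bij_betw_def inj_on_def G_def using assms by (auto simp: image_iff) blast+
  then show ?thesis using bij_betw_same_card by metis
qed

lemma square_cong_half_range:
  fixes p y :: int
  assumes "odd p" and "0 < p"
  shows "\<exists>m \<in> {0..(p - 1) div 2}. [m^2 = y^2] (mod p)"
proof (cases "y mod p \<le> (p - 1) div 2")
  case True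
  have "[(y mod p)^2 = y^2] (mod p)" by (intro cong_pow) (simp add: cong_def)
  then show ?thesis using True \<open>0 < p\<close> by (intro bexI[of _ "y mod p"]) simp_all
next
  case False
  have "[p - y mod p = - y] (mod p)"
    using dvd_add[OF dvd_refl dvd_minus_mod[of p y]] by (simp add: cong_iff_dvd_diff algebra_simps)
  then have "[(p - y mod p)^2 = (- y)^2] (mod p)" by (rule cong_pow)
  then have "[(p - y mod p)^2 = y^2] (mod p)" by simp
  moreover have "p - y mod p \<in> {0..(p - 1) div 2}"
  proof -
    obtain k where "p = 2 * k + 1" using \<open>odd p\<close> by (auto elim: oddE)
    then show ?thesis using False pos_mod_bound[of p y] \<open>0 < p\<close> by simp
  qed
  ultimately show ?thesis by blast
qed

lemma eq_if_square_cong_half_range: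
  fixes p m m' :: int
  assumes "prime p" and "m \<in> {0..(p - 1) div 2}" "m' \<in> {0..(p - 1) div 2}"
    and "[m^2 = m'^2] (mod p)"
  shows "m = m'"
proof -
  have "p dvd (m - m') * (m + m')"
    using assms(4) by (simp add: cong_iff_dvd_diff power2_eq_square algebra_simps)
  then have "[m = m'] (mod p) \<or> [m + m' = 0] (mod p)"
    using assms(1) by (auto simp: prime_dvd_mult_iff cong_iff_dvd_diff)
  moreover have "0 \<le> m" "m < p" "0 \<le> m'" "m' < p" "0 \<le> m + m'" "m + m' < p"
    using assms(2,3) by auto
  ultimately have "m = m' \<or> m + m' = 0"
    using prime_gt_0_int[OF assms(1)] cong_less_imp_eq_int by blast
  then show ?thesis using assms(2,3) by auto
qed

lemma coprime_if_not_cong_0: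
  fixes p c :: int
  assumes "prime p" and "\<not> [c = 0] (mod p)"
  shows "coprime c p"
  using assms prime_imp_coprime[of p c] by (simp add: cong_0_iff ac_simps)

context
  fixes p :: int
  assumes prime: "prime p" and odd: "2 < p"
begin

lemma not_cong_4_0: "\<not> [4 = 0] (mod p)"
proof
  assume "[4 = 0] (mod p)"
  then have "p dvd 2 * 2" by (simp add: cong_0_iff)
  then have "p dvd 2" using prime prime_dvd_mult_iff by blast
  then show False using odd zdvd_imp_le[of p 2] by simp
qed

lemma bij_betw_square_quadres:
  "bij_betw (\<lambda>m. m^2 mod p) {0..(p - 1) div 2} {t \<in> {0..p - 1}. QuadRes p t}"
proof (rule bij_betw_imageI)
  show "inj_on (\<lambda>m. m^2 mod p) {0..(p - 1) div 2}"
    using eq_if_square_cong_half_range[OF prime] by (auto intro!: inj_onI simp: cong_def)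
  have "odd p" using prime odd prime_odd_int by blast
  show "(\<lambda>m. m^2 mod p) ` {0..(p - 1) div 2} = {t \<in> {0..p - 1}. QuadRes p t}"
  proof (intro equalityI subsetI)
    fix t assume "t \<in> (\<lambda>m. m^2 mod p) ` {0..(p - 1) div 2}"
    then obtain m where "t = m^2 mod p" by blast
    then show "t \<in> {t \<in> {0..p - 1}. QuadRes p t}"
      using odd by (auto simp: QuadRes_def cong_def intro: exI[of _ m])
  next
    fix t assume t: "t \<in> {t \<in> {0..p - 1}. QuadRes p t}"
    then obtain y where "[y^2 = t] (mod p)" unfolding QuadRes_def by blast
    moreover obtain m where "m \<in> {0..(p - 1) div 2}" "[m^2 = y^2] (mod p)"
      using square_cong_half_range[OF \<open>odd p\<close>] odd by fastforce
    ultimately have "m^2 mod p = t" using t by (auto simp: cong_def)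
    then show "t \<in> (\<lambda>m. m^2 mod p) ` {0..(p - 1) div 2}" using \<open>m \<in> _\<close> by blast
  qed
qed

lemma card_quadres: "card {t \<in> {0..p - 1}. QuadRes p t} = nat ((p + 1) div 2)"
proof -
  have "card {t \<in> {0..p - 1}. QuadRes p t} = card {0..(p - 1) div 2}"
    using bij_betw_same_card[OF bij_betw_square_quadres] by simp
  also have "\<dots> = nat ((p + 1) div 2)" using odd by simp
  finally show ?thesis .
qed

lemma cong_in_range_imp_eq: "x \<in> {0..p - 1} \<Longrightarrow> y \<in> {0..p - 1} \<Longrightarrow> [x = y] (mod p) \<Longrightarrow> x = y"
  using cong_less_imp_eq_int[of x p y] by simp

lemma eq_if_mult_cong_in_range:
  assumes "\<not> [c = 0] (mod p)" and "a \<in> {0..p - 1}" "b \<in> {0..p - 1}" and "[c * a = c * b] (mod p)"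
  shows "a = b"
  using assms cong_mult_lcancel[OF coprime_if_not_cong_0[OF prime]] cong_in_range_imp_eq by blast

lemma ratio_ex1:
  assumes x: "x \<in> {0..p - 1}" "QuadRes p (x^2 - 4)" "x \<noteq> p - 2"
  shows "\<exists>!t. t \<in> {t \<in> {0..p - 1}. QuadRes p t} - {1} \<and> [t * (x + 2) = x - 2] (mod p)"
proof -
  have "\<not> [x + 2 = 0] (mod p)"
  proof
    assume "[x + 2 = 0] (mod p)"
    then have "[x = p - 2] (mod p)"
      using dvd_diff[of p "x + 2" p] by (simp add: cong_iff_dvd_diff algebra_simps)
    then show False using x cong_in_range_imp_eq[of x "p - 2"] odd by simp
  qed
  then obtain i where i: "[(x + 2) * i = 1] (mod p)"
    using cong_solve_coprime_int coprime_if_not_cong_0[OF prime] by blast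
  obtain s where s: "[s^2 = x^2 - 4] (mod p)" using x(2) unfolding QuadRes_def by blast
  define t where "t = ((x - 2) * i) mod p"
  have t: "[t = (x - 2) * i] (mod p)" by (simp add: t_def cong_def)
  have "[t * (x + 2) = (x - 2) * i * (x + 2)] (mod p)" by (intro cong_mult t cong_refl)
  also have "(x - 2) * i * (x + 2) = (x - 2) * ((x + 2) * i)" by simp
  also have "[\<dots> = (x - 2) * 1] (mod p)" by (intro cong_mult cong_refl i)
  finally have R: "[t * (x + 2) = x - 2] (mod p)" by simp
  have "[(s * i)^2 = (x^2 - 4) * i^2] (mod p)"
    unfolding power_mult_distrib by (intro cong_mult s cong_refl)
  also have "(x^2 - 4) * i^2 = (x - 2) * i * ((x + 2) * i)"
    by (simp add: power2_eq_square algebra_simps)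
  also have "[\<dots> = (x - 2) * i * 1] (mod p)" by (intro cong_mult cong_refl i)
  also have "[(x - 2) * i * 1 = t] (mod p)" using t by (simp add: cong_sym)
  finally have "QuadRes p t" unfolding QuadRes_def by blast
  moreover have "t \<noteq> 1"
  proof
    assume "t = 1"
    then show False using R not_cong_4_0 by (simp add: cong_iff_dvd_diff)
  qed
  moreover have "t \<in> {0..p - 1}" using odd by (simp add: t_def)
  ultimately have "t \<in> {t \<in> {0..p - 1}. QuadRes p t} - {1}" by simp
  moreover have "t' = t" if "t' \<in> {0..p - 1}" "[t' * (x + 2) = x - 2] (mod p)" for t'
  proof (rule eq_if_mult_cong_in_range[OF \<open>\<not> [x + 2 = 0] (mod p)\<close> that(1) \<open>t \<in> {0..p - 1}\<close>])
    show "[(x + 2) * t' = (x + 2) * t] (mod p)"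
      using that(2) R by (metis cong_sym cong_trans mult.commute)
  qed
  ultimately show ?thesis using R by blast
qed

lemma preimage_ex1:
  assumes t: "t \<in> {0..p - 1}" "QuadRes p t" "t \<noteq> 1"
  shows "\<exists>!x. x \<in> {x \<in> {0..p - 1}. QuadRes p (x^2 - 4)} - {p - 2} \<and> [t * (x + 2) = x - 2] (mod p)"
proof -
  have "\<not> [t - 1 = 0] (mod p)"
  proof
    assume "[t - 1 = 0] (mod p)"
    then have "[t = 1] (mod p)" by (simp add: cong_iff_dvd_diff)
    then show False using t odd cong_in_range_imp_eq[of t 1] by simp
  qed
  then obtain j where j: "[(t - 1) * j = 1] (mod p)"
    using cong_solve_coprime_int coprime_if_not_cong_0[OF prime] by blast
  obtain y where y: "[y^2 = t] (mod p)" using t(2) unfolding QuadRes_def by blast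
  define x where "x = (- 2 * (t + 1) * j) mod p"
  have "x \<in> {0..p - 1}" using odd by (simp add: x_def)
  have "p dvd x - (- 2 * (t + 1) * j)" by (simp add: x_def mod_eq_dvd_iff[symmetric])
  moreover have "t * (x + 2) - (x - 2)
      = (t - 1) * (x - (- 2 * (t + 1) * j)) - 2 * (t + 1) * ((t - 1) * j - 1)"
    by (simp add: algebra_simps)
  ultimately have R: "[t * (x + 2) = x - 2] (mod p)"
    using j by (simp add: cong_iff_dvd_diff)
  have "(y * (x + 2))^2 - (x^2 - 4) = (x + 2) * ((y^2 - t) * (x + 2) + (t * (x + 2) - (x - 2)))"
    by (simp add: power2_eq_square algebra_simps)
  then have "QuadRes p (x^2 - 4)"
    using y R unfolding QuadRes_def cong_iff_dvd_diff by (metis dvd_add dvd_mult dvd_mult2)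
  moreover have "x \<noteq> p - 2"
  proof
    assume "x = p - 2"
    then have "p dvd (t * (x + 2) - (x - 2)) - p * (t - 1)" using R by (simp add: cong_iff_dvd_diff)
    then show False using not_cong_4_0 \<open>x = p - 2\<close> by (simp add: cong_0_iff algebra_simps)
  qed
  moreover have "x' = x" if "x' \<in> {0..p - 1}" "[t * (x' + 2) = x' - 2] (mod p)" for x'
  proof (rule eq_if_mult_cong_in_range[OF \<open>\<not> [t - 1 = 0] (mod p)\<close> that(1) \<open>x \<in> {0..p - 1}\<close>])
    have "p dvd (t * (x' + 2) - (x' - 2)) - (t * (x + 2) - (x - 2))"
      using that(2) R unfolding cong_iff_dvd_diff by (rule dvd_diff)
    moreover have "(t * (x' + 2) - (x' - 2)) - (t * (x + 2) - (x - 2)) = (t - 1) * x' - (t - 1) * x"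
      by (simp add: algebra_simps)
    ultimately show "[(t - 1) * x' = (t - 1) * x] (mod p)" by (simp add: cong_iff_dvd_diff)
  qed
  ultimately show ?thesis using R \<open>x \<in> {0..p - 1}\<close> by blast
qed

text \<open>The Moebius map \<open>x \<mapsto> (x - 2)/(x + 2)\<close> matches the \<open>x \<noteq> -2\<close> with square \<open>x\<^sup>2 - 4\<close>
  to the squares \<open>\<noteq> 1\<close>, since \<open>(x - 2)/(x + 2) = (x\<^sup>2 - 4)/(x + 2)\<^sup>2\<close>.\<close>
lemma card_disc_quadres: "card {x \<in> {0..p - 1}. QuadRes p (x^2 - 4)} = nat ((p + 1) div 2)"
proof -
  define S where "S = {x \<in> {0..p - 1}. QuadRes p (x^2 - 4)}"
  define Q where "Q = {t \<in> {0..p - 1}. QuadRes p t}"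
  have "card (S - {p - 2}) = card (Q - {1})"
  proof (rule card_eq_if_bijective_relation[where R = "\<lambda>x t. [t * (x + 2) = x - 2] (mod p)"])
    show "\<exists>!t. t \<in> Q - {1} \<and> [t * (x + 2) = x - 2] (mod p)" if "x \<in> S - {p - 2}" for x
      using that unfolding S_def Q_def by (intro ratio_ex1) auto
    show "\<exists>!x. x \<in> S - {p - 2} \<and> [t * (x + 2) = x - 2] (mod p)" if "t \<in> Q - {1}" for t
      using that unfolding S_def Q_def by (intro preimage_ex1) auto
  qed
  moreover have "p - 2 \<in> S"
  proof -
    have "QuadRes p ((p - 2)^2 - 4)" unfolding QuadRes_def
      by (rule exI[of _ 0]) (simp add: cong_iff_dvd_diff power2_eq_square algebra_simps)
    then show ?thesis using odd unfolding S_def by simp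
  qed
  moreover have "QuadRes p 1" unfolding QuadRes_def by (rule exI[of _ 1]) simp
  then have "1 \<in> Q" using odd unfolding Q_def by simp
  moreover have "finite S" "finite Q" unfolding S_def Q_def by (rule finite_subset[of _ "{0..p - 1}"], auto)+
  ultimately have "card S = card Q" by (metis card.remove)
  then show ?thesis using card_quadres unfolding S_def Q_def by simp
qed

lemma card_cheb_map_2_image: "card (cheb_map 2 p ` {0..p - 1}) = nat ((p + 1) div 2)"
proof -
  define Q where "Q = {t \<in> {0..p - 1}. QuadRes p t}"
  have "(\<lambda>y. y^2 mod p) ` {0..p - 1} \<subseteq> Q"
    using odd by (auto simp: Q_def QuadRes_def cong_def)
  moreover have "Q = (\<lambda>y. y^2 mod p) ` {0..(p - 1) div 2}"
    using bij_betw_imp_surj_on[OF bij_betw_square_quadres] by (simp add: Q_def)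
  moreover have "\<dots> \<subseteq> (\<lambda>y. y^2 mod p) ` {0..p - 1}" by (rule image_mono) auto
  ultimately have squares: "(\<lambda>y. y^2 mod p) ` {0..p - 1} = Q" by blast
  have "cheb_map 2 p = (\<lambda>t. (t - 2) mod p) \<circ> (\<lambda>y. y^2 mod p)"
    by (auto simp: cheb_map_def poly_cheb_2 mod_diff_left_eq)
  then have "cheb_map 2 p ` {0..p - 1} = (\<lambda>t. (t - 2) mod p) ` ((\<lambda>y. y^2 mod p) ` {0..p - 1})"
    by (simp only: image_comp)
  then have "cheb_map 2 p ` {0..p - 1} = (\<lambda>t. (t - 2) mod p) ` Q" by (simp only: squares)
  moreover have "inj_on (\<lambda>t. (t - 2) mod p) Q"
  proof (rule inj_onI)
    fix t t' assume "t \<in> Q" "t' \<in> Q" "(t - 2) mod p = (t' - 2) mod p"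
    then have "[t = t'] (mod p)" by (simp add: mod_eq_dvd_iff cong_iff_dvd_diff)
    then show "t = t'" using \<open>t \<in> Q\<close> \<open>t' \<in> Q\<close> cong_in_range_imp_eq unfolding Q_def by blast
  qed
  ultimately show ?thesis using card_quadres by (simp add: card_image Q_def)
qed

context
  fixes d :: nat
  assumes half: "2 * int d = p + 1"
begin

lemma two_mult_half_cong: "[2 * int d = 1] (mod p)"
  using half by (simp add: cong_iff_dvd_diff)

lemma pcong_power_twice_half:
  assumes "pcong p q (z ^ nat p) w" and "pcong p q (w * z) 1"
  shows "pcong p q (z ^ (2 * d)) 1"
proof -
  have "nat p + 1 = 2 * d" using half odd by linarith
  then have "z ^ (2 * d) = z ^ nat p * z" by (simp flip: \<open>nat p + 1 = 2 * d\<close>)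
  also have "pcong p q \<dots> (w * z)" by (intro pcong_mult assms(1) pcong_refl)
  finally show ?thesis using assms(2) by (rule pcong_trans)
qed

lemma cheb_half_residue:
  assumes "QuadRes p (x^2 - 4)"
  shows "[poly (cheb d) x = x] (mod p) \<or> [poly (cheb d) x = - x] (mod p)"
proof -
  obtain s where s: "[s^2 = x^2 - 4] (mod p)" using assms unfolding QuadRes_def by blast
  define h where "h = int d"
  define z where "z = h * (x + s)"
  define w where "w = h * (x - s)"
  have h: "[2 * h = 1] (mod p)" unfolding h_def by (rule two_mult_half_cong)
  have "z + w = 2 * h * x" unfolding z_def w_def by (simp add: algebra_simps)
  then have sum: "[z + w = x] (mod p)" using cong_mult[OF h cong_refl[of x]] by simp
  have "z * w = h * h * (x^2 - s^2)" unfolding z_def w_def by (simp add: algebra_simps power2_eq_square)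
  also have "[\<dots> = h * h * 4] (mod p)"
    using cong_diff[OF cong_refl[of "x^2"] s] by (intro cong_mult cong_refl) simp
  also have "h * h * 4 = (2 * h) * (2 * h)" by simp
  also have "[\<dots> = 1 * 1] (mod p)" by (intro cong_mult h)
  finally have prod: "[z * w = 1] (mod p)" by simp
  define k where "k = nat ((p - 1) div 2)"
  have "(p - 1) div 2 = int d - 1" using half by linarith
  then have d: "d = Suc k" unfolding k_def using half odd by arith
  define \<epsilon> where "\<epsilon> = Legendre z p"
  have "[z ^ k = \<epsilon>] (mod p)" "[w ^ k = \<epsilon>] (mod p)"
    using Legendre_eq_if_mult_cong_1[OF prime odd prod]
      cong_sym[OF euler_criterion_int[OF prime odd, of z]]
      cong_sym[OF euler_criterion_int[OF prime odd, of w]]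
    unfolding \<epsilon>_def k_def by simp_all
  then have "[z * z ^ k + w * w ^ k = z * \<epsilon> + w * \<epsilon>] (mod p)"
    by (intro cong_add cong_mult cong_refl)
  then have "[z ^ d + w ^ d = \<epsilon> * x] (mod p)"
    using cong_mult[OF cong_refl[of \<epsilon>] sum] unfolding d
    by (simp add: algebra_simps) (metis cong_trans)
  then have "[poly (cheb d) x = \<epsilon> * x] (mod p)"
    using cong_cheb[OF sum prod, of d] cong_trans by blast
  moreover have "\<epsilon> = 1 \<or> \<epsilon> = -1"
    using not_cong_0_if_mult_cong_1[OF prod] odd unfolding \<epsilon>_def Legendre_def by auto
  ultimately show ?thesis by auto
qed

lemma cheb_half_nonresidue:
  assumes "\<not> QuadRes p (x^2 - 4)"
  shows "[poly (cheb d) x ^ 2 = 4] (mod p)"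
proof -
  define h where "h = int d"
  define q where "q = [:-(x^2 - 4), 0, 1:]"
  define z where "z = [:h * x, h:]"
  define w where "w = [:h * x, -h:]"
  have h: "[2 * h = 1] (mod p)" unfolding h_def by (rule two_mult_half_cong)
  have "z + w = [:2 * h * x:]" unfolding z_def w_def by simp
  also have "pcong p q \<dots> [:x:]" using cong_mult[OF h cong_refl[of x]] by (intro pcong_const) simp
  finally have sum: "pcong p q (z + w) [:x:]" .
  have "z * w = [:h * h * x^2:] - [:h * h:] * [:0, 1:] ^ 2"
    unfolding z_def w_def by (simp add: power2_eq_square algebra_simps)
  also have "pcong p q \<dots> ([:h * h * x^2:] - [:h * h:] * [:x^2 - 4:])"
    unfolding q_def by (intro pcong_diff pcong_mult pcong_refl pcong_X_squared)
  also have "[:h * h * x^2:] - [:h * h:] * [:x^2 - 4:] = [:(2 * h) * (2 * h):]"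
    by (simp add: algebra_simps)
  also have "pcong p q \<dots> [:1 * 1:]" by (intro pcong_const cong_mult h)
  finally have prod: "pcong p q (z * w) 1" by (simp add: one_pCons)
  have "pcong p q (z ^ nat p) w" "pcong p q (w ^ nat p) z"
    using pcong_power_prime_conj[OF prime odd assms, of "h * x" h]
      pcong_power_prime_conj[OF prime odd assms, of "h * x" "-h"]
    unfolding z_def w_def q_def by simp_all
  moreover have "pcong p q (w * z) 1" using prod by (simp add: mult.commute)
  ultimately have z_power: "pcong p q (z ^ (2 * d)) 1" and w_power: "pcong p q (w ^ (2 * d)) 1"
    using prod pcong_power_twice_half by blast+
  have "[:poly (cheb d) x ^ 2:] = [:poly (cheb d) x:] ^ 2" by (simp add: poly_const_pow)
  also have "pcong p q \<dots> ((z ^ d + w ^ d) ^ 2)" by (intro pcong_power pcong_cheb sum prod)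
  also have "(z ^ d + w ^ d) ^ 2 = z ^ (2 * d) + 2 * (z * w) ^ d + w ^ (2 * d)"
    by (simp add: power2_eq_square power_mult_distrib power_mult algebra_simps)
  also have "pcong p q \<dots> (1 + 2 * 1 + 1)"
    using pcong_power[OF prod, of d]
    by (intro pcong_add pcong_mult z_power w_power pcong_refl) simp_all
  also have "(1 + 2 * 1 + 1 :: int poly) = [:4:]" by (simp add: numeral_poly)
  finally show ?thesis by (simp add: q_def pcong_const_iff)
qed

lemma QuadRes_disc_cheb_half: "QuadRes p (poly (cheb d) y ^ 2 - 4)"
proof (cases "QuadRes p (y^2 - 4)")
  case True
  then have "[poly (cheb d) y ^ 2 = y ^ 2] (mod p)"
    using cheb_half_residue by (metis cong_pow power2_minus)
  then have "[poly (cheb d) y ^ 2 - 4 = y^2 - 4] (mod p)" by (intro cong_diff cong_refl)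
  then show ?thesis using True QuadRes_cong by blast
next
  case False
  then have "[0^2 = poly (cheb d) y ^ 2 - 4] (mod p)"
    using cheb_half_nonresidue by (simp add: cong_iff_dvd_diff dvd_diff_commute)
  then show ?thesis unfolding QuadRes_def by blast
qed

lemma cheb_map_half_image:
  assumes "odd d"
  shows "cheb_map d p ` {0..p - 1} = {x \<in> {0..p - 1}. QuadRes p (x^2 - 4)}"
proof (intro equalityI subsetI)
  fix v assume "v \<in> cheb_map d p ` {0..p - 1}"
  then obtain y where v: "v = poly (cheb d) y mod p" unfolding cheb_map_def by auto
  then have "[v^2 - 4 = poly (cheb d) y ^ 2 - 4] (mod p)"
    by (intro cong_diff cong_pow cong_refl) (simp add: cong_def)
  then have "QuadRes p (v^2 - 4)" using QuadRes_disc_cheb_half QuadRes_cong by blast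
  then show "v \<in> {x \<in> {0..p - 1}. QuadRes p (x^2 - 4)}" using v odd by simp
next
  fix x assume x: "x \<in> {x \<in> {0..p - 1}. QuadRes p (x^2 - 4)}"
  then consider "[poly (cheb d) x = x] (mod p)" | "[poly (cheb d) x = - x] (mod p)"
    using cheb_half_residue by blast
  then show "x \<in> cheb_map d p ` {0..p - 1}"
  proof cases
    case 1
    then have "cheb_map d p x = x" using x by (simp add: cheb_map_def cong_def)
    then show ?thesis using x by force
  next
    case 2
    define y where "y = (- x) mod p"
    have "[poly (cheb d) y = poly (cheb d) (- x)] (mod p)"
      unfolding y_def by (rule cong_poly) (simp add: cong_def)
    also have "poly (cheb d) (- x) = - poly (cheb d) x"
      using \<open>odd d\<close> by (simp add: poly_cheb_minus)
    also have "[- poly (cheb d) x = x] (mod p)"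
      using 2 by (metis cong_minus_minus_iff minus_minus)
    finally have "cheb_map d p y = x" using x by (simp add: cheb_map_def cong_def)
    moreover have "y \<in> {0..p - 1}" using odd by (simp add: y_def)
    ultimately show ?thesis by force
  qed
qed

end

end

lemma card_cheb_leaves:
  assumes "0 < p"
  shows "card (cheb_leaves d p) = nat p - card (cheb_map d p ` {0..p - 1})"
proof -
  have "cheb_leaves d p = {0..p - 1} - cheb_map d p ` {0..p - 1}"
    unfolding cheb_leaves_def by auto
  moreover have "cheb_map d p ` {0..p - 1} \<subseteq> {0..p - 1}"
    using assms by (auto simp: cheb_map_def)
  ultimately show ?thesis by (simp add: card_Diff_subset finite_subset)
qed

theorem mainTheorem7:
  fixes d :: nat and p :: int
  assumes "prime d" and "prime p" and "odd p"
    and "d = 2 \<or> 2 * int d = p + 1"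
  shows "card (cheb_leaves d p) = nat ((p - 1) div 2)"
proof -
  have "2 < p" using assms(2,3) prime_ge_2_int[of p] by (cases "p = 2") auto
  have "card (cheb_map d p ` {0..p - 1}) = nat ((p + 1) div 2)"
  proof (cases "d = 2")
    case True
    then show ?thesis using card_cheb_map_2_image[OF assms(2) \<open>2 < p\<close>] by simp
  next
    case False
    then have "odd d" and "2 * int d = p + 1"
      using assms(1,4) prime_odd_nat[of d] prime_ge_2_nat[of d] by auto
    then show ?thesis
      using cheb_map_half_image[OF assms(2) \<open>2 < p\<close>] card_disc_quadres[OF assms(2) \<open>2 < p\<close>]
      by simp
  qed
  moreover obtain k where "p = 2 * k + 1" using assms(3) by (auto elim: oddE)
  ultimately show ?thesis using card_cheb_leaves[of p d] \<open>2 < p\<close> by simp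
qed

end
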